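(* Let $(\mathcal P,\mathcal M,p)$ be an operational theory containing binary measurements $M_1,M_2,M_3$ (outcomes $X_i\in\{0,1\}$), and two families of four-outcome measurements $M_{ij}$ and $M'_{ij}$, $(ij)\in\{(12),(23),(31)\}$, with outcomes $(X_i,X_j)$, such that each is a joint measurement of $M_i$ and $M_j$: $M_1^{(2)}\simeq M_1^{(3)}\simeq M_1$, $M_2^{(1)}\simeq M_2^{(3)}\simeq M_2$, $M_3^{(1)}\simeq M_3^{(2)}\simeq M_3$, and likewise $M_i'^{(j)}\simeq M_i$ for all these pairs. Let $P_*,P_*^\perp,P_1,P_1^\perp,P_2,P_2^\perp,P_3,P_3^\perp\in\mathcal P$ and let $P_x^{(\mathrm{ave})}$ be the preparation implementing $P_x$ or $P_x^\perp$ with probability $\tfrac12$ each ($x\in\{1,2,3,*\}$); suppose $P_*^{(\mathrm{ave})}\simeq P_1^{(\mathrm{ave})}\simeq P_2^{(\mathrm{ave})}\simeq P_3^{(\mathrm{ave})}$. Define $p(\mathrm{anti}|M_*,P)=\tfrac13\sum_{(ij)}p(X_i\neq X_j|M_{ij},P)$, similarly $p(\mathrm{anti}|M'_*,P)$ with $M'_{ij}$, and $\eta_{\mathrm{ave}}=\tfrac16\sum_{i=1}^3(\eta(M_i,P_i)+\eta(M_i,P_i^\perp))$. If the theory admits an ontological model that is both measurement and preparation noncontextual, then $$p(\mathrm{anti}|M_*,P_* )+p(\mathrm{anti}|M'_*,P_*^\perp)\le2\Big(1-\tfrac13\eta_{\mathrm{ave}}\Big).$$ Moreover, using only the operational equivalences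 involving the $M_{ij}$ (not the $M'_{ij}$) together with the preparation equivalences, such a theory must also satisfy $$p(\mathrm{anti}|M_*,P_* )+p(\mathrm{anti}|M_*,P_*^\perp)\le 2\Big(1-\tfrac13\eta_{\mathrm{ave}}\Big)\quad\text{and}\quad p(\mathrm{anti}|M_*,P_* )\le\tfrac23(2-\eta_{\mathrm{ave}}).$$
   Context: Operational theory: preparations $\mathcal P$, measurements $\mathcal M$ with finite outcome sets, probabilities $p(X|M,P)$. Ontological model: ontic states $\Lambda$, distributions $\mu(\cdot|P)$, response functions $\xi(X|M,\lambda)$ (probability distributions over outcomes) with $p(X|M,P)=\sum_\lambda\xi(X|M,\lambda)\mu(\lambda|P)$; a mixture of preparations is represented by the corresponding mixture of distributions, and a coarse-graining of outcomes by summing response functions. $M_i^{(j)}$ denotes the binary measurement obtained from $M_{ij}$ by discarding $X_j$ (coarse-graining), i.e. $p(X_i|M_i^{(j)},P)=\sum_{X_j}p(X_i,X_j|M_{ij},P)$; $M_i'^{(j)}$ similarly from $M'_{ij}$. Two measurements are operationally equivalent ($\simeq$) if they give the same outcome probabilities for every preparation; $P\simeq P'$ if they give the same outcome probabilities for every measurement. Measurement noncontextuality: operationally equivalent measurement events have equal response functions for every $\lambda$; preparation noncontextuality: $P\simeq P'\Rightarrow\mu(\cdot|P)=\mu(\cdot|P')$. The predictability is $\eta(M,P)=2\max_{X\in\{0,1\}}p(X|M,P)-1$. Outcome determinism is not assumed. *)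

theory Defs
  imports "HOL-Probability.Probability"
begin

text \<open>Outcomes are encoded as natural-number
lists: a binary measurement has outcomes [0] and [1]; a four-outcome joint
measurement M_ij has outcomes [X_i, X_j].\<close>

definition op_theory :: "('m \<Rightarrow> nat list set) \<Rightarrow> ('m \<Rightarrow> 'p \<Rightarrow> nat list \<Rightarrow> real) \<Rightarrow> bool" where
  "op_theory Out p \<longleftrightarrow>
     (\<forall>M. finite (Out M) \<and> Out M \<noteq> {}) \<and>
     (\<forall>M P. (\<forall>X\<in>Out M. 0 \<le> p M P X) \<and> (\<Sum>X\<in>Out M. p M P X) = 1)"

definition ev_prob :: "('m \<Rightarrow> 'p \<Rightarrow> nat list \<Rightarrow> real) \<Rightarrow> 'm \<Rightarrow> 'p \<Rightarrow> nat list set \<Rightarrow> real" where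
  "ev_prob p M P S = (\<Sum>X\<in>S. p M P X)"

definition meas_event_equiv ::
  "('m \<Rightarrow> nat list set) \<Rightarrow> ('m \<Rightarrow> 'p \<Rightarrow> nat list \<Rightarrow> real) \<Rightarrow> 'm \<Rightarrow> nat list set \<Rightarrow> 'm \<Rightarrow> nat list set \<Rightarrow> bool" where
  "meas_event_equiv Out p M S M' S' \<longleftrightarrow>
     S \<subseteq> Out M \<and> S' \<subseteq> Out M' \<and> (\<forall>P. ev_prob p M P S = ev_prob p M' P S')"

definition prep_equiv :: "('m \<Rightarrow> nat list set) \<Rightarrow> ('m \<Rightarrow> 'p \<Rightarrow> nat list \<Rightarrow> real) \<Rightarrow> 'p \<Rightarrow> 'p \<Rightarrow> bool" where
  "prep_equiv Out p P P' \<longleftrightarrow> (\<forall>M. \<forall>X\<in>Out M. p M P X = p M P' X)"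

definition ont_model ::
  "('m \<Rightarrow> nat list set) \<Rightarrow> ('m \<Rightarrow> 'p \<Rightarrow> nat list \<Rightarrow> real) \<Rightarrow> ('p \<Rightarrow> 'l pmf) \<Rightarrow> ('m \<Rightarrow> 'l \<Rightarrow> nat list \<Rightarrow> real) \<Rightarrow> bool" where
  "ont_model Out p \<mu> \<xi> \<longleftrightarrow>
     (\<forall>M l. (\<forall>X\<in>Out M. 0 \<le> \<xi> M l X) \<and> (\<Sum>X\<in>Out M. \<xi> M l X) = 1) \<and>
     (\<forall>M P. \<forall>X\<in>Out M. p M P X = measure_pmf.expectation (\<mu> P) (\<lambda>l. \<xi> M l X))"

text \<open>Measurement noncontextuality: operationally equivalent measurement events
(coarse-grainings represented by summing response functions) have equal
response functions for every ontic state.\<close>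
definition meas_noncontextual ::
  "('m \<Rightarrow> nat list set) \<Rightarrow> ('m \<Rightarrow> 'p \<Rightarrow> nat list \<Rightarrow> real) \<Rightarrow> ('m \<Rightarrow> 'l \<Rightarrow> nat list \<Rightarrow> real) \<Rightarrow> bool" where
  "meas_noncontextual Out p \<xi> \<longleftrightarrow>
     (\<forall>M S M' S'. meas_event_equiv Out p M S M' S' \<longrightarrow>
        (\<forall>l. (\<Sum>X\<in>S. \<xi> M l X) = (\<Sum>X\<in>S'. \<xi> M' l X)))"

definition prep_noncontextual ::
  "('m \<Rightarrow> nat list set) \<Rightarrow> ('m \<Rightarrow> 'p \<Rightarrow> nat list \<Rightarrow> real) \<Rightarrow> ('p \<Rightarrow> 'l pmf) \<Rightarrow> bool" where
  "prep_noncontextual Out p \<mu> \<longleftrightarrow> (\<forall>P P'. prep_equiv Out p P P' \<longrightarrow> \<mu> P = \<mu> P')"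

definition pairs3 :: "(nat \<times> nat) set" where
  "pairs3 = {(1,2),(2,3),(3,1)}"

definition p_anti :: "('m \<Rightarrow> 'p \<Rightarrow> nat list \<Rightarrow> real) \<Rightarrow> (nat \<Rightarrow> nat \<Rightarrow> 'm) \<Rightarrow> 'p \<Rightarrow> real" where
  "p_anti p Mj P = (1/3) * (\<Sum>(i,j)\<in>pairs3. p (Mj i j) P [0,1] + p (Mj i j) P [1,0])"

definition predictability :: "('m \<Rightarrow> 'p \<Rightarrow> nat list \<Rightarrow> real) \<Rightarrow> 'm \<Rightarrow> 'p \<Rightarrow> real" where
  "predictability p M P = 2 * max (p M P [0]) (p M P [1]) - 1"

definition eta_ave :: "('m \<Rightarrow> 'p \<Rightarrow> nat list \<Rightarrow> real) \<Rightarrow> (nat \<Rightarrow> 'm) \<Rightarrow> (nat \<Rightarrow> 'p) \<Rightarrow> (nat \<Rightarrow> 'p) \<Rightarrow> real" where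
  "eta_ave p M P Pp = (1/6) * (\<Sum>i\<in>{1,2,3}. predictability p (M i) (P i) + predictability p (M i) (Pp i))"

text \<open>M_ij is a joint measurement of M_i and M_j: outcome [X_i,X_j]; discarding
X_j gives M_i and discarding X_i gives M_j (operational equivalence, unfolded).\<close>
definition joint_meas ::
  "('m \<Rightarrow> nat list set) \<Rightarrow> ('m \<Rightarrow> 'p \<Rightarrow> nat list \<Rightarrow> real) \<Rightarrow> 'm \<Rightarrow> 'm \<Rightarrow> 'm \<Rightarrow> bool" where
  "joint_meas Out p Mij Mi Mj \<longleftrightarrow>
     (\<forall>P. \<forall>x\<in>{0,1}.
        (\<Sum>y\<in>{0,1}. p Mij P [x,y]) = p Mi P [x] \<and>
        (\<Sum>y\<in>{0,1}. p Mij P [y,x]) = p Mj P [x])"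

end

theory Submission
  imports Defs
begin

text \<open>Measurement noncontextuality forces the response function of M_ij at an ontic state
\<lambda> to be a distribution on {0,1}^2 whose marginals are the responses of M_i and M_j. With
a_i the response of M_i for outcome 0, the event X_i \<noteq> X_j then has response at most
min(a_i + a_j, 2 - a_i - a_j), and summed over the three pairs at most
3 - (1/3) \<Sum>_i |2 a_i - 1|. Integrating, p(anti|M_*,P) \<le> 1 - (1/9) E_\<mu>(P) \<Sum>_i |2 a_i - 1|.
Preparation noncontextuality identifies every \<mu>(P_x^(ave)) with a single
\<nu> = (\<mu>(P_x) + \<mu>(P_x^\<perp>))/2; as \<eta>(M_i,P) \<le> E_\<mu>(P) |2 a_i - 1|, this gives
6 \<eta>_ave \<le> (E_\<mu>(P_*) + E_\<mu>(P_*^\<perp>)) \<Sum>_i |2 a_i - 1|, and the three bounds follow by adding.\<close>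

lemma integrable_measure_pmf_bounded:
  fixes f :: "'a \<Rightarrow> real"
  assumes "\<And>x. \<bar>f x\<bar> \<le> B"
  shows "integrable (measure_pmf q) f"
  by (rule measure_pmf.integrable_const_bound[where B = B]) (auto simp: assms)

lemma expectation_pmf_mixture:
  fixes f :: "'a \<Rightarrow> real"
  assumes bounded: "\<And>x. \<bar>f x\<bar> \<le> B"
    and mixture: "\<And>x. pmf r x = t * pmf q1 x + (1 - t) * pmf q2 x"
  shows "measure_pmf.expectation r f
           = t * measure_pmf.expectation q1 f + (1 - t) * measure_pmf.expectation q2 f"
proof -
  have density: "measure_pmf.expectation q f = (\<integral>x. pmf q x * f x \<partial>count_space UNIV)"
    for q :: "'a pmf"
    unfolding measure_pmf_eq_density by (subst integral_density) auto
  have integrable: "integrable (count_space UNIV) (\<lambda>x. pmf q x * f x)" for q :: "'a pmf"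
    using integrable_measure_pmf_bounded[OF bounded, of q]
    unfolding measure_pmf_eq_density by (subst (asm) integrable_density) auto
  have "measure_pmf.expectation r f
          = (\<integral>x. t * (pmf q1 x * f x) + (1 - t) * (pmf q2 x * f x) \<partial>count_space UNIV)"
    unfolding density mixture by (simp add: algebra_simps)
  also have "\<dots> = t * (\<integral>x. pmf q1 x * f x \<partial>count_space UNIV)
                   + (1 - t) * (\<integral>x. pmf q2 x * f x \<partial>count_space UNIV)"
    using integrable[of q1] integrable[of q2] by simp
  finally show ?thesis unfolding density .
qed

lemma three_pair_anti_bound:
  fixes a1 a2 a3 t12 t23 t31 :: real
  assumes "0 \<le> a1" "a1 \<le> 1" "0 \<le> a2" "a2 \<le> 1" "0 \<le> a3" "a3 \<le> 1"
    and "t12 \<le> a1 + a2" "t12 \<le> 2 - a1 - a2"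
    and "t23 \<le> a2 + a3" "t23 \<le> 2 - a2 - a3"
    and "t31 \<le> a3 + a1" "t31 \<le> 2 - a3 - a1"
  shows "3 * (t12 + t23 + t31) \<le> 9 - (\<bar>2 * a1 - 1\<bar> + \<bar>2 * a2 - 1\<bar> + \<bar>2 * a3 - 1\<bar>)"
  using assms by (auto simp: abs_if)

definition ontic_anti :: "('m \<Rightarrow> 'l \<Rightarrow> nat list \<Rightarrow> real) \<Rightarrow> (nat \<Rightarrow> nat \<Rightarrow> 'm) \<Rightarrow> 'l \<Rightarrow> real" where
  "ontic_anti \<xi> N l = (\<Sum>(i,j)\<in>pairs3. \<xi> (N i j) l [0,1] + \<xi> (N i j) l [1,0])"

definition ontic_predictability :: "('m \<Rightarrow> 'l \<Rightarrow> nat list \<Rightarrow> real) \<Rightarrow> (nat \<Rightarrow> 'm) \<Rightarrow> 'l \<Rightarrow> real" where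
  "ontic_predictability \<xi> M l = (\<Sum>i\<in>{1,2,3}. \<bar>2 * \<xi> (M i) l [0] - 1\<bar>)"

lemma ontic_anti_expand:
  "ontic_anti \<xi> N l = (\<xi> (N 1 2) l [0,1] + \<xi> (N 1 2) l [1,0])
      + (\<xi> (N 2 3) l [0,1] + \<xi> (N 2 3) l [1,0]) + (\<xi> (N 3 1) l [0,1] + \<xi> (N 3 1) l [1,0])"
  by (simp add: ontic_anti_def pairs3_def)

lemma ontic_predictability_expand:
  "ontic_predictability \<xi> M l
      = \<bar>2 * \<xi> (M 1) l [0] - 1\<bar> + \<bar>2 * \<xi> (M 2) l [0] - 1\<bar> + \<bar>2 * \<xi> (M 3) l [0] - 1\<bar>"
  by (simp add: ontic_predictability_def)

locale noncontextual_model =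
  fixes Out :: "'m \<Rightarrow> nat list set"
    and p :: "'m \<Rightarrow> 'p \<Rightarrow> nat list \<Rightarrow> real"
    and \<mu> :: "'p \<Rightarrow> 'l pmf"
    and \<xi> :: "'m \<Rightarrow> 'l \<Rightarrow> nat list \<Rightarrow> real"
  assumes operational: "op_theory Out p"
    and model: "ont_model Out p \<mu> \<xi>"
    and meas_nc: "meas_noncontextual Out p \<xi>"
begin

lemma response_bounded:
  assumes "X \<in> Out N"
  shows "0 \<le> \<xi> N l X \<and> \<xi> N l X \<le> 1"
proof -
  have "finite (Out N)" using operational by (simp add: op_theory_def)
  moreover have "\<forall>Y\<in>Out N. 0 \<le> \<xi> N l Y" and "(\<Sum>Y\<in>Out N. \<xi> N l Y) = 1"
    using model by (auto simp: ont_model_def)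
  ultimately show ?thesis
    using member_le_sum[of X "Out N" "\<xi> N l"] assms by auto
qed

lemma integrable_response:
  "X \<in> Out N \<Longrightarrow> integrable (measure_pmf q) (\<lambda>l. \<xi> N l X)"
  by (rule integrable_measure_pmf_bounded[where B = 1]) (use response_bounded in auto)

lemma prob_eq_expectation:
  "X \<in> Out N \<Longrightarrow> p N P X = measure_pmf.expectation (\<mu> P) (\<lambda>l. \<xi> N l X)"
  using model by (simp add: ont_model_def)

lemma binary_response_1:
  assumes "Out M = {[0],[1]}"
  shows "\<xi> M l [1] = 1 - \<xi> M l [0]"
proof -
  have "(\<Sum>X\<in>Out M. \<xi> M l X) = 1" using model by (simp add: ont_model_def)
  then show ?thesis using assms by simp
qed

lemma joint_response_marginals:
  assumes four: "Out N = {[x,y] | x y. x \<in> {0,1} \<and> y \<in> {0,1}}"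
    and "Out Mi = {[0],[1]}" and "Out Mk = {[0],[1]}"
    and joint: "joint_meas Out p N Mi Mk"
    and "x \<in> {0,1}"
  shows "\<xi> N l [x,0] + \<xi> N l [x,1] = \<xi> Mi l [x]"
    and "\<xi> N l [0,x] + \<xi> N l [1,x] = \<xi> Mk l [x]"
proof -
  have "meas_event_equiv Out p N {[x,0],[x,1]} Mi {[x]}"
    and "meas_event_equiv Out p N {[0,x],[1,x]} Mk {[x]}"
    using assms by (auto simp: meas_event_equiv_def ev_prob_def joint_meas_def)
  then show "\<xi> N l [x,0] + \<xi> N l [x,1] = \<xi> Mi l [x]"
    and "\<xi> N l [0,x] + \<xi> N l [1,x] = \<xi> Mk l [x]"
    using meas_nc unfolding meas_noncontextual_def by fastforce+
qed

lemma joint_response_anti_le: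
  assumes four: "Out N = {[x,y] | x y. x \<in> {0,1} \<and> y \<in> {0,1}}"
    and binary: "Out Mi = {[0],[1]}" "Out Mk = {[0],[1]}"
    and joint: "joint_meas Out p N Mi Mk"
  shows "\<xi> N l [0,1] + \<xi> N l [1,0] \<le> \<xi> Mi l [0] + \<xi> Mk l [0]"
    and "\<xi> N l [0,1] + \<xi> N l [1,0] \<le> 2 - \<xi> Mi l [0] - \<xi> Mk l [0]"
proof -
  note marginal_0 = joint_response_marginals[OF assms, of 0 l]
    and marginal_1 = joint_response_marginals[OF assms, of 1 l]
  have "0 \<le> \<xi> N l [x,y]" if "x \<in> {0,1}" "y \<in> {0,1}" for x y
    using response_bounded[where X = "[x,y]" and N = N and l = l] four that by auto
  then show "\<xi> N l [0,1] + \<xi> N l [1,0] \<le> \<xi> Mi l [0] + \<xi> Mk l [0]"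
    and "\<xi> N l [0,1] + \<xi> N l [1,0] \<le> 2 - \<xi> Mi l [0] - \<xi> Mk l [0]"
    using marginal_0 marginal_1 binary_response_1[OF binary(1)] binary_response_1[OF binary(2)]
    by (smt (verit) insert_iff)+
qed

lemma ontic_predictability_bounded:
  assumes binary: "\<And>i. i \<in> {1,2,3} \<Longrightarrow> Out (M i) = {[0],[1]}"
  shows "0 \<le> ontic_predictability \<xi> M l \<and> ontic_predictability \<xi> M l \<le> 3"
proof -
  have term_le: "\<bar>2 * \<xi> (M i) l [0] - 1\<bar> \<le> 1" if "i \<in> {1,2,3}" for i
    using response_bounded[of "[0]" "M i" l] binary[OF that] by (simp add: abs_le_iff)
  show ?thesis
    unfolding ontic_predictability_expand using term_le[of 1] term_le[of 2] term_le[of 3] by simp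
qed

lemma integrable_ontic_predictability:
  assumes "\<And>i. i \<in> {1,2,3} \<Longrightarrow> Out (M i) = {[0],[1]}"
  shows "integrable (measure_pmf q) (ontic_predictability \<xi> M)"
proof (rule integrable_measure_pmf_bounded)
  show "\<bar>ontic_predictability \<xi> M l\<bar> \<le> 3" for l
    using ontic_predictability_bounded[where M = M and l = l, OF assms] by simp
qed

lemma expectation_ontic_predictability_le:
  assumes "\<And>i. i \<in> {1,2,3} \<Longrightarrow> Out (M i) = {[0],[1]}"
  shows "measure_pmf.expectation q (ontic_predictability \<xi> M) \<le> 3"
  using integrable_ontic_predictability[OF assms]
    ontic_predictability_bounded[where M = M, OF assms]
  by (intro measure_pmf.integral_le_const) auto

lemma ontic_anti_le:
  assumes binary: "\<And>i. i \<in> {1,2,3} \<Longrightarrow> Out (M i) = {[0],[1]}"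
    and four: "\<And>i j. (i,j) \<in> pairs3 \<Longrightarrow> Out (N i j) = {[x,y] | x y. x \<in> {0,1} \<and> y \<in> {0,1}}"
    and joint: "\<And>i j. (i,j) \<in> pairs3 \<Longrightarrow> joint_meas Out p (N i j) (M i) (M j)"
  shows "3 * ontic_anti \<xi> N l \<le> 9 - ontic_predictability \<xi> M l"
proof -
  have pair_le: "\<xi> (N i j) l [0,1] + \<xi> (N i j) l [1,0] \<le> \<xi> (M i) l [0] + \<xi> (M j) l [0]"
    "\<xi> (N i j) l [0,1] + \<xi> (N i j) l [1,0] \<le> 2 - \<xi> (M i) l [0] - \<xi> (M j) l [0]"
    if ij: "(i,j) \<in> pairs3" for i j
  proof -
    have "i \<in> {1,2,3}" "j \<in> {1,2,3}" using ij by (auto simp: pairs3_def)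
    then show "\<xi> (N i j) l [0,1] + \<xi> (N i j) l [1,0] \<le> \<xi> (M i) l [0] + \<xi> (M j) l [0]"
      "\<xi> (N i j) l [0,1] + \<xi> (N i j) l [1,0] \<le> 2 - \<xi> (M i) l [0] - \<xi> (M j) l [0]"
      using joint_response_anti_le[OF four[OF ij] binary binary joint[OF ij]] by blast+
  qed
  have response_01: "0 \<le> \<xi> (M i) l [0] \<and> \<xi> (M i) l [0] \<le> 1" if "i \<in> {1,2,3}" for i
    using response_bounded[of "[0]" "M i" l] binary[OF that] by simp
  have in_pairs3: "(1,2) \<in> pairs3" "(2,3) \<in> pairs3" "(3,1) \<in> pairs3"
    by (simp_all add: pairs3_def)
  show ?thesis
    unfolding ontic_anti_expand ontic_predictability_expand
    using response_01[of 1] response_01[of 2] response_01[of 3]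
      pair_le[OF in_pairs3(1)] pair_le[OF in_pairs3(2)] pair_le[OF in_pairs3(3)]
    by (intro three_pair_anti_bound) simp_all
qed

lemma p_anti_eq_expectation:
  assumes four: "\<And>i j. (i,j) \<in> pairs3 \<Longrightarrow> Out (N i j) = {[x,y] | x y. x \<in> {0,1} \<and> y \<in> {0,1}}"
  shows "p_anti p N q = (1/3) * measure_pmf.expectation (\<mu> q) (ontic_anti \<xi> N)"
proof -
  define anti where "anti ij = (\<lambda>l. case ij of (i,j) \<Rightarrow> \<xi> (N i j) l [0,1] + \<xi> (N i j) l [1,0])"
    for ij
  have outcomes: "[0,1] \<in> Out (N i j)" "[1,0] \<in> Out (N i j)" if "(i,j) \<in> pairs3" for i j
    using four[OF that] by auto
  have integrable: "integrable (measure_pmf (\<mu> q)) (anti ij)" if "ij \<in> pairs3" for ij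
  proof (cases ij)
    case (Pair i j)
    then show ?thesis
      using outcomes[of i j] that by (simp add: anti_def integrable_response)
  qed
  have pair: "measure_pmf.expectation (\<mu> q) (anti (i,j)) = p (N i j) q [0,1] + p (N i j) q [1,0]"
    if "(i,j) \<in> pairs3" for i j
    using outcomes[OF that]
    by (simp add: anti_def prob_eq_expectation integrable_response integral_add)
  have "measure_pmf.expectation (\<mu> q) (ontic_anti \<xi> N)
          = measure_pmf.expectation (\<mu> q) (\<lambda>l. \<Sum>ij\<in>pairs3. anti ij l)"
    by (simp add: ontic_anti_def[abs_def] anti_def)
  also have "\<dots> = (\<Sum>ij\<in>pairs3. measure_pmf.expectation (\<mu> q) (anti ij))"
    using integrable by (rule Bochner_Integration.integral_sum)
  also have "\<dots> = (\<Sum>(i,j)\<in>pairs3. p (N i j) q [0,1] + p (N i j) q [1,0])"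
    by (rule sum.cong) (auto simp: pair)
  finally show ?thesis by (simp add: p_anti_def)
qed

lemma predictability_le_expectation:
  assumes binary: "Out M = {[0],[1]}"
  shows "predictability p M q \<le> measure_pmf.expectation (\<mu> q) (\<lambda>l. \<bar>2 * \<xi> M l [0] - 1\<bar>)"
proof -
  let ?e = "measure_pmf.expectation (\<mu> q) (\<lambda>l. \<xi> M l [0])"
  have integrable: "integrable (measure_pmf (\<mu> q)) (\<lambda>l. \<xi> M l [0])"
    using binary by (simp add: integrable_response)
  have "(\<Sum>X\<in>Out M. p M q X) = 1"
    using operational by (simp add: op_theory_def)
  then have "p M q [0] + p M q [1] = 1"
    using binary by simp
  moreover have "p M q [0] = ?e"
    using binary by (simp add: prob_eq_expectation)
  ultimately have "predictability p M q = \<bar>2 * ?e - 1\<bar>"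
    by (simp add: predictability_def max_def)
  also have "\<dots> = \<bar>measure_pmf.expectation (\<mu> q) (\<lambda>l. 2 * \<xi> M l [0] - 1)\<bar>"
    using integrable by simp
  also have "\<dots> \<le> measure_pmf.expectation (\<mu> q) (\<lambda>l. \<bar>2 * \<xi> M l [0] - 1\<bar>)"
    by (rule integral_abs_bound)
  finally show ?thesis .
qed

lemma p_anti_le:
  assumes binary: "\<And>i. i \<in> {1,2,3} \<Longrightarrow> Out (M i) = {[0],[1]}"
    and four: "\<And>i j. (i,j) \<in> pairs3 \<Longrightarrow> Out (N i j) = {[x,y] | x y. x \<in> {0,1} \<and> y \<in> {0,1}}"
    and joint: "\<And>i j. (i,j) \<in> pairs3 \<Longrightarrow> joint_meas Out p (N i j) (M i) (M j)"
  shows "p_anti p N q \<le> 1 - (1/9) * measure_pmf.expectation (\<mu> q) (ontic_predictability \<xi> M)"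
proof -
  have integrable: "integrable (measure_pmf (\<mu> q)) (ontic_predictability \<xi> M)"
    using binary by (rule integrable_ontic_predictability)
  have "measure_pmf.expectation (\<mu> q) (ontic_anti \<xi> N)
          \<le> measure_pmf.expectation (\<mu> q) (\<lambda>l. 3 - (1/3) * ontic_predictability \<xi> M l)"
  proof (rule integral_mono')
    show "integrable (measure_pmf (\<mu> q)) (\<lambda>l. 3 - (1/3) * ontic_predictability \<xi> M l)"
      using integrable by simp
    show "ontic_anti \<xi> N l \<le> 3 - (1/3) * ontic_predictability \<xi> M l" for l
      using ontic_anti_le[where M = M and N = N and l = l, OF binary four joint] by simp
    show "0 \<le> 3 - (1/3) * ontic_predictability \<xi> M l" for l
      using ontic_predictability_bounded[where M = M and l = l, OF binary] by simp
  qed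
  also have "\<dots> = 3 - (1/3) * measure_pmf.expectation (\<mu> q) (ontic_predictability \<xi> M)"
    using integrable by simp
  finally show ?thesis
    using p_anti_eq_expectation[where N = N and q = q, OF four] by simp
qed

lemma eta_ave_le:
  assumes binary: "\<And>i. i \<in> {1,2,3} \<Longrightarrow> Out (M i) = {[0],[1]}"
    and prep_nc: "prep_noncontextual Out p \<mu>"
    and ave_equiv: "\<And>x. x \<in> {1,2,3} \<Longrightarrow> prep_equiv Out p (Pave 0) (Pave x)"
    and model_mix: "\<And>x. x \<in> {0,1,2,3} \<Longrightarrow>
        \<forall>l. pmf (\<mu> (Pave x)) l = (1/2) * pmf (\<mu> (P x)) l + (1/2) * pmf (\<mu> (Pp x)) l"
  shows "eta_ave p M P Pp \<le> (1/6) * (measure_pmf.expectation (\<mu> (P 0)) (ontic_predictability \<xi> M)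
                                     + measure_pmf.expectation (\<mu> (Pp 0)) (ontic_predictability \<xi> M))"
proof -
  define \<nu> where "\<nu> = \<mu> (Pave 0)"
  have ave_eq: "\<mu> (Pave x) = \<nu>" if "x \<in> {0,1,2,3}" for x
    using that prep_nc ave_equiv unfolding prep_noncontextual_def \<nu>_def by fastforce
  have mixture: "measure_pmf.expectation \<nu> f
      = (1/2) * measure_pmf.expectation (\<mu> (P x)) f + (1/2) * measure_pmf.expectation (\<mu> (Pp x)) f"
    if x: "x \<in> {0,1,2,3}" and bounded: "\<And>l. \<bar>f l\<bar> \<le> B" for x and f :: "'l \<Rightarrow> real" and B
  proof -
    have "pmf \<nu> l = (1/2) * pmf (\<mu> (P x)) l + (1 - 1/2) * pmf (\<mu> (Pp x)) l" for l
      using model_mix[OF x] ave_eq[OF x] by simp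
    from expectation_pmf_mixture[where f = f and B = B, OF bounded this] show ?thesis
      by simp
  qed
  define h where "h i l = \<bar>2 * \<xi> (M i) l [0] - 1\<bar>" for i l
  have h_bounded: "\<bar>h i l\<bar> \<le> 1" if "i \<in> {1,2,3}" for i l
    using response_bounded[of "[0]" "M i" l] binary[OF that] by (simp add: h_def abs_le_iff)
  have "predictability p (M i) (P i) + predictability p (M i) (Pp i)
          \<le> 2 * measure_pmf.expectation \<nu> (h i)" if i: "i \<in> {1,2,3}" for i
    using predictability_le_expectation[OF binary[OF i], of "P i"]
      predictability_le_expectation[OF binary[OF i], of "Pp i"]
      mixture[of i "h i", OF _ h_bounded[OF i]] i
    by (simp add: h_def[abs_def])
  then have "(\<Sum>i\<in>{1,2,3}. predictability p (M i) (P i) + predictability p (M i) (Pp i))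
          \<le> 2 * (\<Sum>i\<in>{1,2,3}. measure_pmf.expectation \<nu> (h i))"
    unfolding sum_distrib_left by (rule sum_mono)
  then have "3 * eta_ave p M P Pp \<le> (\<Sum>i\<in>{1,2,3}. measure_pmf.expectation \<nu> (h i))"
    unfolding eta_ave_def by linarith
  also have "\<dots> = measure_pmf.expectation \<nu> (ontic_predictability \<xi> M)"
    unfolding ontic_predictability_def h_def[symmetric]
    by (rule Bochner_Integration.integral_sum[symmetric])
       (rule integrable_measure_pmf_bounded, rule h_bounded)
  also have "\<dots> = (1/2) * (measure_pmf.expectation (\<mu> (P 0)) (ontic_predictability \<xi> M)
                          + measure_pmf.expectation (\<mu> (Pp 0)) (ontic_predictability \<xi> M))"
    using mixture[of 0 "ontic_predictability \<xi> M" 3] ontic_predictability_bounded[OF binary]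
    by simp
  finally show ?thesis by simp
qed

end

theorem mainTheorem9:
  fixes Out :: "'m \<Rightarrow> nat list set"
    and p :: "'m \<Rightarrow> 'p \<Rightarrow> nat list \<Rightarrow> real"
    and M :: "nat \<Rightarrow> 'm"
    and Mj Mj' :: "nat \<Rightarrow> nat \<Rightarrow> 'm"
    and P Pp Pave :: "nat \<Rightarrow> 'p"
    and \<mu> :: "'p \<Rightarrow> 'l pmf"
    and \<xi> :: "'m \<Rightarrow> 'l \<Rightarrow> nat list \<Rightarrow> real"
  assumes thy: "op_theory Out p"
    and binary: "\<And>i. i \<in> {1,2,3} \<Longrightarrow> Out (M i) = {[0],[1]}"
    and four: "\<And>i j. (i,j) \<in> pairs3 \<Longrightarrow> Out (Mj i j) = {[x,y] | x y. x \<in> {0,1} \<and> y \<in> {0,1}}"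
    and four': "\<And>i j. (i,j) \<in> pairs3 \<Longrightarrow> Out (Mj' i j) = {[x,y] | x y. x \<in> {0,1} \<and> y \<in> {0,1}}"
    and joint: "\<And>i j. (i,j) \<in> pairs3 \<Longrightarrow> joint_meas Out p (Mj i j) (M i) (M j)"
    and ave_op: "\<And>x. x \<in> {0,1,2,3} \<Longrightarrow>
        \<forall>N. \<forall>X\<in>Out N. p N (Pave x) X = (1/2) * p N (P x) X + (1/2) * p N (Pp x) X"
    and ave_equiv: "\<And>x. x \<in> {1,2,3} \<Longrightarrow> prep_equiv Out p (Pave 0) (Pave x)"
    and model: "ont_model Out p \<mu> \<xi>"
    and model_mix: "\<And>x. x \<in> {0,1,2,3} \<Longrightarrow>
        \<forall>l. pmf (\<mu> (Pave x)) l = (1/2) * pmf (\<mu> (P x)) l + (1/2) * pmf (\<mu> (Pp x)) l"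
    and MNC: "meas_noncontextual Out p \<xi>"
    and PNC: "prep_noncontextual Out p \<mu>"
  shows "((\<forall>i j. (i,j) \<in> pairs3 \<longrightarrow> joint_meas Out p (Mj' i j) (M i) (M j)) \<longrightarrow>
            p_anti p Mj (P 0) + p_anti p Mj' (Pp 0) \<le> 2 * (1 - (1/3) * eta_ave p M P Pp))
       \<and> p_anti p Mj (P 0) + p_anti p Mj (Pp 0) \<le> 2 * (1 - (1/3) * eta_ave p M P Pp)
       \<and> p_anti p Mj (P 0) \<le> (2/3) * (2 - eta_ave p M P Pp)"
proof -
  interpret noncontextual_model Out p \<mu> \<xi>
    using thy model MNC by unfold_locales
  let ?E = "\<lambda>q. measure_pmf.expectation (\<mu> q) (ontic_predictability \<xi> M)"
  have eta: "eta_ave p M P Pp \<le> (1/6) * (?E (P 0) + ?E (Pp 0))"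
    using eta_ave_le[where M = M and P = P and Pp = Pp and Pave = Pave, OF binary PNC ave_equiv model_mix] .
  have anti: "p_anti p Mj q \<le> 1 - (1/9) * ?E q" for q
    using p_anti_le[where M = M and N = Mj, OF binary four joint] .
  have "?E (Pp 0) \<le> 3"
    using expectation_ontic_predictability_le[where M = M, OF binary] .
  moreover have "p_anti p Mj' (Pp 0) \<le> 1 - (1/9) * ?E (Pp 0)"
    if "\<forall>i j. (i,j) \<in> pairs3 \<longrightarrow> joint_meas Out p (Mj' i j) (M i) (M j)"
    using p_anti_le[where M = M and N = Mj', OF binary four'] that by blast
  ultimately show ?thesis
    using eta anti[of "P 0"] anti[of "Pp 0"] by auto
qed

end
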